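(* Let $\mathbb B$ be a monad and $\mathbb C$ a comonad on a category $\mathcal A$ with a mixed distributive law $\theta\colon\mathrm{BC}\Rightarrow\mathrm{CB}$. Let $\mathrm F\dashv\mathrm U$ be the Eilenberg--Moore adjunction of $\mathbb B$, $\mathbb T$ the induced comonad on $\mathcal A^{\mathbb B}$, $\mathbb C^\theta$ the lifted comonad on $\mathcal A^{\mathbb B}$, and $\mathrm V\colon(\mathcal A^{\mathbb B})_{\mathbb C^\theta}\rightleftarrows\mathcal A^{\mathbb B}\colon\mathrm G$ the Eilenberg--Moore (forgetful--cofree) adjunction of $\mathbb C^\theta$. Let $\mathbb T^\theta$ be the comonad on $(\mathcal A^{\mathbb B})_{\mathbb C^\theta}$ given by $\mathrm T^\theta((X,\alpha),\delta)=((\mathrm B(X),\mu^{\mathbb B}_X),\theta_X\mathrm B(\delta))$, $\mathrm T^\theta(f)=\mathrm T(f)$, with comultiplication and counit those of $\mathbb T$, so that $\mathrm V\mathrm T^\theta=\mathrm T\mathrm V$, and let $\tilde\Lambda\colon\mathrm V\mathrm T^\theta\Rightarrow\mathrm T\mathrm V$ be the identity. Then the unique natural transformation $\tilde\Omega\colon\mathrm T^\theta\mathrm G\Rightarrow\mathrm G\mathrm T$ whose mate under $\mathrm V\dashv\mathrm G$ equals $\tilde\Lambda$ is given by $\tilde\Omega_{(X,\alpha)}=\theta_X$ for all $(X,\alpha)\in\mathrm{Ob}(\mathcal A^{\mathbb B})$. In particular, $\tilde\Omega$ implements a comonad extension $\mathbb T^\theta$ of $\mathbb T$ if and only if, for every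 $(X,\alpha)\in\mathrm{Ob}(\mathcal A^{\mathbb B})$, $\theta_X$ is an isomorphism from $\mathrm T^\theta(\mathrm G(X,\alpha))$ to $\mathrm G(\mathrm T(X,\alpha))$ in $(\mathcal A^{\mathbb B})_{\mathbb C^\theta}$.
   Context: A mixed distributive law $\theta$ of a monad $(\mathrm B,\mu^{\mathbb B},\eta^{\mathbb B})$ over a comonad $(\mathrm C,\Delta^{\mathbb C},\varepsilon^{\mathbb C})$ is $\theta\colon\mathrm{BC}\Rightarrow\mathrm{CB}$ with $\theta\circ\mu^{\mathbb B}\mathrm C=\mathrm C\mu^{\mathbb B}\circ\theta\mathrm B\circ\mathrm B\theta$, $\theta\circ\eta^{\mathbb B}\mathrm C=\mathrm C\eta^{\mathbb B}$, $\Delta^{\mathbb C}\mathrm B\circ\theta=\mathrm C\theta\circ\theta\mathrm C\circ\mathrm B\Delta^{\mathbb C}$, $\varepsilon^{\mathbb C}\mathrm B\circ\theta=\mathrm B\varepsilon^{\mathbb C}$. $\mathcal A^{\mathbb B}$ is the category of $\mathbb B$-algebras $(X,\alpha)$; $\mathrm F(X)=(\mathrm B(X),\mu^{\mathbb B}_X)$, $\mathrm U$ forgets, counit $\varepsilon_{(X,\alpha)}=\alpha$; $\mathbb T=(\mathrm{FU},\mathrm F\eta^{\mathbb B}\mathrm U,\varepsilon)$. $\mathbb C^\theta$: $\mathrm C^\theta(X,\alpha)=(\mathrm C(X),\mathrm C(\alpha)\theta_X)$, $\mathrm C^\theta(f)=\mathrm C(f)$, $\Delta^{\mathbb C^\theta}_{(X,\alpha)}=\Delta^{\mathbb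 C}_X$, $\varepsilon^{\mathbb C^\theta}_{(X,\alpha)}=\varepsilon^{\mathbb C}_X$. $(\mathcal A^{\mathbb B})_{\mathbb C^\theta}$ is the category of $\mathbb C^\theta$-coalgebras $(Y,\delta\colon Y\to\mathrm C^\theta(Y))$ (coassociative, counital); $\mathrm G(Y)=(\mathrm C^\theta(Y),\Delta^{\mathbb C^\theta}_Y)$, $\mathrm V$ forgets; unit $\eta'_{(Y,\delta)}=\delta$, counit $\varepsilon'=\varepsilon^{\mathbb C^\theta}$. The mate of $\tilde\Omega\colon\mathrm T^\theta\mathrm G\Rightarrow\mathrm G\mathrm T$ under $\mathrm V\dashv\mathrm G$ is $\varepsilon'\mathrm T\mathrm V\circ\mathrm V\tilde\Omega\mathrm V\circ\mathrm V\mathrm T^\theta\eta'$. "$\tilde\Omega$ implements a comonad extension $\mathbb T^\theta$ of $\mathbb T$" means $\tilde\Omega$ is a natural isomorphism and $(\mathrm G,\tilde\Omega)$ is a lax morphism of comonads from $\mathbb T^\theta$ to $\mathbb T$, i.e. $\mathrm G\Delta^{\mathbb T}\circ\tilde\Omega=\tilde\Omega\mathrm T\circ\mathrm T^\theta\tilde\Omega\circ\Delta^{\mathbb T^\theta}\mathrm G$ and $\mathrm G\varepsilon^{\mathbb T}\circ\tilde\Omega=\varepsilon^{\mathbb T^\theta}\mathrm G$. *)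

theory Defs
  imports Main
begin

text \<open>A category with objects of type 'o and arrows of type 'a.
  hom X Y is the set of arrows from X to Y; cmp g f is "g after f".\<close>

record ('o, 'a) cat =
  obj :: "'o set"
  hom :: "'o \<Rightarrow> 'o \<Rightarrow> 'a set"
  cmp :: "'a \<Rightarrow> 'a \<Rightarrow> 'a"
  idt :: "'o \<Rightarrow> 'a"

definition is_cat :: "('o, 'a) cat \<Rightarrow> bool" where
  "is_cat A \<longleftrightarrow>
     (\<forall>X Y. hom A X Y \<noteq> {} \<longrightarrow> X \<in> obj A \<and> Y \<in> obj A) \<and>
     (\<forall>X\<in>obj A. idt A X \<in> hom A X X) \<and>
     (\<forall>X Y Z f g. f \<in> hom A X Y \<longrightarrow> g \<in> hom A Y Z \<longrightarrow> cmp A g f \<in> hom A X Z) \<and>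
     (\<forall>W X Y Z f g h. f \<in> hom A W X \<longrightarrow> g \<in> hom A X Y \<longrightarrow> h \<in> hom A Y Z \<longrightarrow>
        cmp A h (cmp A g f) = cmp A (cmp A h g) f) \<and>
     (\<forall>X Y f. f \<in> hom A X Y \<longrightarrow> cmp A (idt A Y) f = f \<and> cmp A f (idt A X) = f)"

definition is_functor ::
  "('o, 'a) cat \<Rightarrow> ('p, 'b) cat \<Rightarrow> ('o \<Rightarrow> 'p) \<Rightarrow> ('a \<Rightarrow> 'b) \<Rightarrow> bool" where
  "is_functor A A' Fo Fa \<longleftrightarrow>
     (\<forall>X\<in>obj A. Fo X \<in> obj A') \<and>
     (\<forall>X Y f. f \<in> hom A X Y \<longrightarrow> Fa f \<in> hom A' (Fo X) (Fo Y)) \<and>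
     (\<forall>X\<in>obj A. Fa (idt A X) = idt A' (Fo X)) \<and>
     (\<forall>X Y Z f g. f \<in> hom A X Y \<longrightarrow> g \<in> hom A Y Z \<longrightarrow> Fa (cmp A g f) = cmp A' (Fa g) (Fa f))"

definition is_nat ::
  "('o, 'a) cat \<Rightarrow> ('p, 'b) cat \<Rightarrow> ('o \<Rightarrow> 'p) \<Rightarrow> ('a \<Rightarrow> 'b) \<Rightarrow>
   ('o \<Rightarrow> 'p) \<Rightarrow> ('a \<Rightarrow> 'b) \<Rightarrow> ('o \<Rightarrow> 'b) \<Rightarrow> bool" where
  "is_nat A A' Fo Fa Go Ga \<tau> \<longleftrightarrow>
     (\<forall>X\<in>obj A. \<tau> X \<in> hom A' (Fo X) (Go X)) \<and>
     (\<forall>X Y f. f \<in> hom A X Y \<longrightarrow> cmp A' (\<tau> Y) (Fa f) = cmp A' (Ga f) (\<tau> X))"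

definition iso_in :: "('o, 'a) cat \<Rightarrow> 'a \<Rightarrow> 'o \<Rightarrow> 'o \<Rightarrow> bool" where
  "iso_in D f X Y \<longleftrightarrow> f \<in> hom D X Y \<and>
     (\<exists>g\<in>hom D Y X. cmp D g f = idt D X \<and> cmp D f g = idt D Y)"

record ('o, 'a) monad =
  mo :: "'o \<Rightarrow> 'o"
  ma :: "'a \<Rightarrow> 'a"
  mu :: "'o \<Rightarrow> 'a"
  eta :: "'o \<Rightarrow> 'a"

record ('o, 'a) comonad =
  co :: "'o \<Rightarrow> 'o"
  ca :: "'a \<Rightarrow> 'a"
  dlt :: "'o \<Rightarrow> 'a"
  eps :: "'o \<Rightarrow> 'a"

definition is_monad :: "('o, 'a) cat \<Rightarrow> ('o, 'a) monad \<Rightarrow> bool" where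
  "is_monad A B \<longleftrightarrow>
     is_functor A A (mo B) (ma B) \<and>
     is_nat A A (mo B \<circ> mo B) (ma B \<circ> ma B) (mo B) (ma B) (mu B) \<and>
     is_nat A A id id (mo B) (ma B) (eta B) \<and>
     (\<forall>X\<in>obj A.
        cmp A (mu B X) (ma B (mu B X)) = cmp A (mu B X) (mu B (mo B X)) \<and>
        cmp A (mu B X) (eta B (mo B X)) = idt A (mo B X) \<and>
        cmp A (mu B X) (ma B (eta B X)) = idt A (mo B X))"

definition is_comonad :: "('o, 'a) cat \<Rightarrow> ('o, 'a) comonad \<Rightarrow> bool" where
  "is_comonad A C \<longleftrightarrow>
     is_functor A A (co C) (ca C) \<and>
     is_nat A A (co C) (ca C) (co C \<circ> co C) (ca C \<circ> ca C) (dlt C) \<and>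
     is_nat A A (co C) (ca C) id id (eps C) \<and>
     (\<forall>X\<in>obj A.
        cmp A (ca C (dlt C X)) (dlt C X) = cmp A (dlt C (co C X)) (dlt C X) \<and>
        cmp A (eps C (co C X)) (dlt C X) = idt A (co C X) \<and>
        cmp A (ca C (eps C X)) (dlt C X) = idt A (co C X))"

definition is_mixed_dist ::
  "('o, 'a) cat \<Rightarrow> ('o, 'a) monad \<Rightarrow> ('o, 'a) comonad \<Rightarrow> ('o \<Rightarrow> 'a) \<Rightarrow> bool" where
  "is_mixed_dist A B C \<theta> \<longleftrightarrow>
     is_nat A A (mo B \<circ> co C) (ma B \<circ> ca C) (co C \<circ> mo B) (ca C \<circ> ma B) \<theta> \<and>
     (\<forall>X\<in>obj A.
        cmp A (\<theta> X) (mu B (co C X)) =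
          cmp A (ca C (mu B X)) (cmp A (\<theta> (mo B X)) (ma B (\<theta> X))) \<and>
        cmp A (\<theta> X) (eta B (co C X)) = ca C (eta B X) \<and>
        cmp A (dlt C (mo B X)) (\<theta> X) =
          cmp A (ca C (\<theta> X)) (cmp A (\<theta> (co C X)) (ma B (dlt C X))) \<and>
        cmp A (eps C (mo B X)) (\<theta> X) = ma B (eps C X))"

text \<open>Objects of A^B are pairs (X, alpha); arrows are arrows of A that are algebra maps.\<close>
definition alg_obj :: "('o, 'a) cat \<Rightarrow> ('o, 'a) monad \<Rightarrow> ('o \<times> 'a) set" where
  "alg_obj A B = {Xa. fst Xa \<in> obj A \<and> snd Xa \<in> hom A (mo B (fst Xa)) (fst Xa) \<and>
      cmp A (snd Xa) (eta B (fst Xa)) = idt A (fst Xa) \<and>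
      cmp A (snd Xa) (ma B (snd Xa)) = cmp A (snd Xa) (mu B (fst Xa))}"

definition alg_cat :: "('o, 'a) cat \<Rightarrow> ('o, 'a) monad \<Rightarrow> ('o \<times> 'a, 'a) cat" where
  "alg_cat A B = \<lparr> obj = alg_obj A B,
     hom = (\<lambda>Xa Yb. if Xa \<in> alg_obj A B \<and> Yb \<in> alg_obj A B
        then {f \<in> hom A (fst Xa) (fst Yb). cmp A f (snd Xa) = cmp A (snd Yb) (ma B f)}
        else {}),
     cmp = cmp A,
     idt = (\<lambda>Xa. idt A (fst Xa)) \<rparr>"

definition coalg_obj :: "('p, 'a) cat \<Rightarrow> ('p, 'a) comonad \<Rightarrow> ('p \<times> 'a) set" where
  "coalg_obj D K = {Yd. fst Yd \<in> obj D \<and> snd Yd \<in> hom D (fst Yd) (co K (fst Yd)) \<and>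
      cmp D (ca K (snd Yd)) (snd Yd) = cmp D (dlt K (fst Yd)) (snd Yd) \<and>
      cmp D (eps K (fst Yd)) (snd Yd) = idt D (fst Yd)}"

definition coalg_cat :: "('p, 'a) cat \<Rightarrow> ('p, 'a) comonad \<Rightarrow> ('p \<times> 'a, 'a) cat" where
  "coalg_cat D K = \<lparr> obj = coalg_obj D K,
     hom = (\<lambda>Yd Ze. if Yd \<in> coalg_obj D K \<and> Ze \<in> coalg_obj D K
        then {f \<in> hom D (fst Yd) (fst Ze). cmp D (ca K f) (snd Yd) = cmp D (snd Ze) f}
        else {}),
     cmp = cmp D,
     idt = (\<lambda>Yd. idt D (fst Yd)) \<rparr>"

definition Cth :: "('o, 'a) cat \<Rightarrow> ('o, 'a) comonad \<Rightarrow> ('o \<Rightarrow> 'a) \<Rightarrow> ('o \<times> 'a, 'a) comonad" where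
  "Cth A C \<theta> = \<lparr> co = (\<lambda>Xa. (co C (fst Xa), cmp A (ca C (snd Xa)) (\<theta> (fst Xa)))),
                  ca = ca C,
                  dlt = (\<lambda>Xa. dlt C (fst Xa)),
                  eps = (\<lambda>Xa. eps C (fst Xa)) \<rparr>"

definition EMcoalg ::
  "('o, 'a) cat \<Rightarrow> ('o, 'a) monad \<Rightarrow> ('o, 'a) comonad \<Rightarrow> ('o \<Rightarrow> 'a) \<Rightarrow> (('o \<times> 'a) \<times> 'a, 'a) cat" where
  "EMcoalg A B C \<theta> = coalg_cat (alg_cat A B) (Cth A C \<theta>)"

text \<open>T = FU on A^B: (X,alpha) -> (B X, mu_X), f -> B f.\<close>
definition T_o :: "('o, 'a) monad \<Rightarrow> 'o \<times> 'a \<Rightarrow> 'o \<times> 'a" where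
  "T_o B Xa = (mo B (fst Xa), mu B (fst Xa))"

text \<open>Cofree functor G : A^B -> (A^B)_{C^theta}, G(Y) = (C^theta Y, Delta_Y), G f = C f.\<close>
definition G_o :: "('o, 'a) cat \<Rightarrow> ('o, 'a) comonad \<Rightarrow> ('o \<Rightarrow> 'a) \<Rightarrow> 'o \<times> 'a \<Rightarrow> ('o \<times> 'a) \<times> 'a" where
  "G_o A C \<theta> Xa = (co (Cth A C \<theta>) Xa, dlt (Cth A C \<theta>) Xa)"

text \<open>T^theta((X,alpha),delta) = ((B X, mu_X), theta_X . B delta), T^theta f = T f.\<close>
definition Tth_o :: "('o, 'a) cat \<Rightarrow> ('o, 'a) monad \<Rightarrow> ('o \<Rightarrow> 'a) \<Rightarrow> ('o \<times> 'a) \<times> 'a \<Rightarrow> ('o \<times> 'a) \<times> 'a" where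
  "Tth_o A B \<theta> Y = (T_o B (fst Y), cmp A (\<theta> (fst (fst Y))) (ma B (snd Y)))"

definition Omega_nat ::
  "('o, 'a) cat \<Rightarrow> ('o, 'a) monad \<Rightarrow> ('o, 'a) comonad \<Rightarrow> ('o \<Rightarrow> 'a) \<Rightarrow> ('o \<times> 'a \<Rightarrow> 'a) \<Rightarrow> bool" where
  "Omega_nat A B C \<theta> \<Omega> \<longleftrightarrow>
     is_nat (alg_cat A B) (EMcoalg A B C \<theta>)
       (Tth_o A B \<theta> \<circ> G_o A C \<theta>) (ma B \<circ> ca C)
       (G_o A C \<theta> \<circ> T_o B) (ca C \<circ> ma B) \<Omega>"

text \<open>Mate of Omega under V -| G, evaluated at a coalgebra Y = ((X,alpha),delta):
  eps'_{T V Y} . Omega_{V Y} . T^theta(eta'_Y), with eps' = eps^{C^theta}, eta'_Y = delta.\<close>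
definition mate ::
  "('o, 'a) cat \<Rightarrow> ('o, 'a) monad \<Rightarrow> ('o, 'a) comonad \<Rightarrow> ('o \<Rightarrow> 'a) \<Rightarrow> ('o \<times> 'a \<Rightarrow> 'a) \<Rightarrow>
   ('o \<times> 'a) \<times> 'a \<Rightarrow> 'a" where
  "mate A B C \<theta> \<Omega> Y =
     cmp (alg_cat A B) (eps (Cth A C \<theta>) (T_o B (fst Y)))
        (cmp (alg_cat A B) (\<Omega> (fst Y)) (ma B (snd Y)))"

text \<open>Omega implements a comonad extension T^theta of T: natural isomorphism, and
  (G, Omega) is a lax morphism of comonads from T^theta to T. Here
  Delta^T_(X,alpha) = B eta_X, eps^T_(X,alpha) = alpha, and the comultiplication and counit
  of T^theta at Y are those of T at V Y.\<close>
definition implements_ext ::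
  "('o, 'a) cat \<Rightarrow> ('o, 'a) monad \<Rightarrow> ('o, 'a) comonad \<Rightarrow> ('o \<Rightarrow> 'a) \<Rightarrow> ('o \<times> 'a \<Rightarrow> 'a) \<Rightarrow> bool" where
  "implements_ext A B C \<theta> \<Omega> \<longleftrightarrow>
     Omega_nat A B C \<theta> \<Omega> \<and>
     (\<forall>Xa\<in>obj (alg_cat A B).
        iso_in (EMcoalg A B C \<theta>) (\<Omega> Xa) (Tth_o A B \<theta> (G_o A C \<theta> Xa)) (G_o A C \<theta> (T_o B Xa))) \<and>
     (\<forall>Xa\<in>obj (alg_cat A B).
        cmp (EMcoalg A B C \<theta>) (ca C (ma B (eta B (fst Xa)))) (\<Omega> Xa) =
        cmp (EMcoalg A B C \<theta>) (\<Omega> (T_o B Xa))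
          (cmp (EMcoalg A B C \<theta>) (ma B (\<Omega> Xa))
             (ma B (eta B (fst (fst (G_o A C \<theta> Xa))))))) \<and>
     (\<forall>Xa\<in>obj (alg_cat A B).
        cmp (EMcoalg A B C \<theta>) (ca C (snd Xa)) (\<Omega> Xa) = snd (fst (G_o A C \<theta> Xa)))"

end

theory Submission
  imports Defs
begin

(* The mate of \<Omega> at a coalgebra ((X,\<alpha>),\<delta>) is \<epsilon>_BX \<circ> \<Omega>_(X,\<alpha>) \<circ> B\<delta>.
   For \<Omega> = \<theta> the counit law \<epsilon>B \<circ> \<theta> = B\<epsilon> of the distributive law turns it into
   B(\<epsilon>_X \<circ> \<delta>) = id. Conversely, evaluating the mate condition at the cofree coalgebra
   G(X,\<alpha>) and using naturality of \<Omega> along the algebra map \<epsilon>_X : C^\<theta>(X,\<alpha>) \<rightarrow> (X,\<alpha>)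
   gives \<epsilon>_BX \<circ> \<Omega>_(X,\<alpha>) = B\<epsilon>_X. Since \<Omega>_(X,\<alpha>) is a morphism of coalgebras,
     \<Omega>_(X,\<alpha>) = C\<epsilon>_BX \<circ> \<Delta>_BX \<circ> \<Omega>_(X,\<alpha>) = CB\<epsilon>_X \<circ> \<theta>_CX \<circ> B\<Delta>_X
              = \<theta>_X \<circ> B(C\<epsilon>_X \<circ> \<Delta>_X) = \<theta>_X.
   For \<Omega> = \<theta> the compatibility with the comultiplications follows from \<theta> \<circ> \<eta>C = C\<eta>
   and naturality of \<theta>, and the one with the counits is trivial. *)

datatype ('o, 'a) tarrow = TArrow (src: 'o) (mor: 'a) (tgt: 'o)

lemma tarrow_eq_iff: "p = q \<longleftrightarrow> src p = src q \<and> mor p = mor q \<and> tgt p = tgt q"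
  by (auto intro: tarrow.expand)

locale mixed_distributive_law =
  fixes A :: "('o, 'a) cat" and B :: "('o, 'a) monad" and C :: "('o, 'a) comonad"
    and \<theta> :: "'o \<Rightarrow> 'a"
  assumes cat: "is_cat A" and monad: "is_monad A B" and comonad: "is_comonad A C"
    and dist: "is_mixed_dist A B C \<theta>"
begin

text \<open>Arrows of \<open>A\<close> are carried together with their source and target, so that
  composability and the side conditions of associativity become syntactic and are
  discharged by the simplifier.\<close>

definition typed :: "('o, 'a) tarrow \<Rightarrow> bool" where
  "typed p \<longleftrightarrow> mor p \<in> hom A (src p) (tgt p)"

definition tcomp :: "('o, 'a) tarrow \<Rightarrow> ('o, 'a) tarrow \<Rightarrow> ('o, 'a) tarrow" (infixr "\<odot>" 55) where
  "q \<odot> p = TArrow (src p) (cmp A (mor q) (mor p)) (tgt q)"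

definition idT :: "'o \<Rightarrow> ('o, 'a) tarrow" where
  "idT X = TArrow X (idt A X) X"

definition Bt :: "('o, 'a) tarrow \<Rightarrow> ('o, 'a) tarrow" where
  "Bt p = TArrow (mo B (src p)) (ma B (mor p)) (mo B (tgt p))"

definition Ct :: "('o, 'a) tarrow \<Rightarrow> ('o, 'a) tarrow" where
  "Ct p = TArrow (co C (src p)) (ca C (mor p)) (co C (tgt p))"

definition muT :: "'o \<Rightarrow> ('o, 'a) tarrow" where
  "muT X = TArrow (mo B (mo B X)) (mu B X) (mo B X)"

definition etaT :: "'o \<Rightarrow> ('o, 'a) tarrow" where
  "etaT X = TArrow X (eta B X) (mo B X)"

definition deltaT :: "'o \<Rightarrow> ('o, 'a) tarrow" where
  "deltaT X = TArrow (co C X) (dlt C X) (co C (co C X))"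

definition epsT :: "'o \<Rightarrow> ('o, 'a) tarrow" where
  "epsT X = TArrow (co C X) (eps C X) X"

definition thetaT :: "'o \<Rightarrow> ('o, 'a) tarrow" where
  "thetaT X = TArrow (mo B (co C X)) (\<theta> X) (co C (mo B X))"

lemmas tarrow_defs = tcomp_def idT_def Bt_def Ct_def muT_def etaT_def deltaT_def epsT_def thetaT_def

lemma src_simps [simp]:
  "src (q \<odot> p) = src p" "src (idT X) = X" "src (Bt p) = mo B (src p)" "src (Ct p) = co C (src p)"
  "src (muT X) = mo B (mo B X)" "src (etaT X) = X" "src (deltaT X) = co C X"
  "src (epsT X) = co C X" "src (thetaT X) = mo B (co C X)"
  and tgt_simps [simp]:
  "tgt (q \<odot> p) = tgt q" "tgt (idT X) = X" "tgt (Bt p) = mo B (tgt p)" "tgt (Ct p) = co C (tgt p)"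
  "tgt (muT X) = mo B X" "tgt (etaT X) = mo B X" "tgt (deltaT X) = co C (co C X)"
  "tgt (epsT X) = X" "tgt (thetaT X) = co C (mo B X)"
  and mor_simps [simp]:
  "mor (q \<odot> p) = cmp A (mor q) (mor p)" "mor (idT X) = idt A X" "mor (Bt p) = ma B (mor p)"
  "mor (Ct p) = ca C (mor p)" "mor (muT X) = mu B X" "mor (etaT X) = eta B X"
  "mor (deltaT X) = dlt C X" "mor (epsT X) = eps C X" "mor (thetaT X) = \<theta> X"
  by (simp_all add: tarrow_defs)

lemma typed_TArrow [simp]: "typed (TArrow X f Y) \<longleftrightarrow> f \<in> hom A X Y"
  by (simp add: typed_def)

lemma typed_objs [simp]: "typed p \<Longrightarrow> src p \<in> obj A" "typed p \<Longrightarrow> tgt p \<in> obj A"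
  using cat unfolding is_cat_def typed_def by blast+

lemma typed_tcomp [simp]: "typed p \<Longrightarrow> typed q \<Longrightarrow> tgt p = src q \<Longrightarrow> typed (q \<odot> p)"
  using cat unfolding is_cat_def typed_def by auto

lemma typed_idT [simp]: "X \<in> obj A \<Longrightarrow> typed (idT X)"
  using cat unfolding is_cat_def typed_def by auto

lemma tcomp_assoc:
  "typed p \<Longrightarrow> typed q \<Longrightarrow> typed r \<Longrightarrow> tgt p = src q \<Longrightarrow> tgt q = src r \<Longrightarrow>
    (r \<odot> q) \<odot> p = r \<odot> (q \<odot> p)"
  using cat unfolding is_cat_def typed_def by (auto simp: tcomp_def)

lemma idT_tcomp: "typed p \<Longrightarrow> tgt p = X \<Longrightarrow> idT X \<odot> p = p"
  using cat unfolding is_cat_def typed_def by (cases p) (auto simp: tarrow_defs)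

lemma tcomp_idT: "typed p \<Longrightarrow> src p = X \<Longrightarrow> p \<odot> idT X = p"
  using cat unfolding is_cat_def typed_def by (cases p) (auto simp: tarrow_defs)

lemma tcomp_reassoc:
  "q \<odot> p = r \<Longrightarrow> typed k \<Longrightarrow> typed p \<Longrightarrow> typed q \<Longrightarrow> tgt k = src p \<Longrightarrow> tgt p = src q \<Longrightarrow>
    q \<odot> (p \<odot> k) = r \<odot> k"
  by (metis tcomp_assoc)

lemma tcomp_reassoc2:
  "q \<odot> p = q' \<odot> p' \<Longrightarrow> typed k \<Longrightarrow> typed p \<Longrightarrow> typed q \<Longrightarrow> typed p' \<Longrightarrow> typed q' \<Longrightarrow>
    tgt k = src p \<Longrightarrow> tgt p = src q \<Longrightarrow> tgt p' = src q' \<Longrightarrow> q \<odot> (p \<odot> k) = q' \<odot> (p' \<odot> k)"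
  by (metis tcomp_assoc src_simps(1))

lemma mo_obj [simp]: "X \<in> obj A \<Longrightarrow> mo B X \<in> obj A"
  and typed_Bt [simp]: "typed p \<Longrightarrow> typed (Bt p)"
  and Bt_idT: "X \<in> obj A \<Longrightarrow> Bt (idT X) = idT (mo B X)"
  and Bt_tcomp: "typed p \<Longrightarrow> typed q \<Longrightarrow> tgt p = src q \<Longrightarrow> Bt (q \<odot> p) = Bt q \<odot> Bt p"
  using monad unfolding is_monad_def is_functor_def typed_def by (auto simp: tarrow_defs)

lemma co_obj [simp]: "X \<in> obj A \<Longrightarrow> co C X \<in> obj A"
  and typed_Ct [simp]: "typed p \<Longrightarrow> typed (Ct p)"
  and Ct_idT: "X \<in> obj A \<Longrightarrow> Ct (idT X) = idT (co C X)"
  and Ct_tcomp: "typed p \<Longrightarrow> typed q \<Longrightarrow> tgt p = src q \<Longrightarrow> Ct (q \<odot> p) = Ct q \<odot> Ct p"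
  using comonad unfolding is_comonad_def is_functor_def typed_def by (auto simp: tarrow_defs)

lemma typed_muT [simp]: "X \<in> obj A \<Longrightarrow> typed (muT X)"
  and typed_etaT [simp]: "X \<in> obj A \<Longrightarrow> typed (etaT X)"
  and mu_natural: "typed f \<Longrightarrow> muT (tgt f) \<odot> Bt (Bt f) = Bt f \<odot> muT (src f)"
  and mu_assoc: "X \<in> obj A \<Longrightarrow> muT X \<odot> Bt (muT X) = muT X \<odot> muT (mo B X)"
  and mu_etaT: "X \<in> obj A \<Longrightarrow> muT X \<odot> etaT (mo B X) = idT (mo B X)"
  using monad unfolding is_monad_def is_nat_def typed_def by (auto simp: tarrow_defs)

lemma typed_deltaT [simp]: "X \<in> obj A \<Longrightarrow> typed (deltaT X)"
  and typed_epsT [simp]: "X \<in> obj A \<Longrightarrow> typed (epsT X)"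
  and delta_natural: "typed f \<Longrightarrow> deltaT (tgt f) \<odot> Ct f = Ct (Ct f) \<odot> deltaT (src f)"
  and eps_natural: "typed f \<Longrightarrow> epsT (tgt f) \<odot> Ct f = f \<odot> epsT (src f)"
  and delta_coassoc: "X \<in> obj A \<Longrightarrow> Ct (deltaT X) \<odot> deltaT X = deltaT (co C X) \<odot> deltaT X"
  and epsT_delta: "X \<in> obj A \<Longrightarrow> epsT (co C X) \<odot> deltaT X = idT (co C X)"
  and Ct_epsT_delta: "X \<in> obj A \<Longrightarrow> Ct (epsT X) \<odot> deltaT X = idT (co C X)"
  using comonad unfolding is_comonad_def is_nat_def typed_def
  by (auto simp: tarrow_defs intro: tarrow.expand)

lemma typed_thetaT [simp]: "X \<in> obj A \<Longrightarrow> typed (thetaT X)"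
  and theta_natural: "typed f \<Longrightarrow> thetaT (tgt f) \<odot> Bt (Ct f) = Ct (Bt f) \<odot> thetaT (src f)"
  and theta_mu: "X \<in> obj A \<Longrightarrow> thetaT X \<odot> muT (co C X) = Ct (muT X) \<odot> thetaT (mo B X) \<odot> Bt (thetaT X)"
  and theta_eta: "X \<in> obj A \<Longrightarrow> thetaT X \<odot> etaT (co C X) = Ct (etaT X)"
  and theta_delta: "X \<in> obj A \<Longrightarrow>
    deltaT (mo B X) \<odot> thetaT X = Ct (thetaT X) \<odot> thetaT (co C X) \<odot> Bt (deltaT X)"
  and theta_eps: "X \<in> obj A \<Longrightarrow> epsT (mo B X) \<odot> thetaT X = Bt (epsT X)"
  using dist unfolding is_mixed_dist_def is_nat_def typed_def by (auto simp: tarrow_defs)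

definition algT :: "'o \<times> 'a \<Rightarrow> ('o, 'a) tarrow" where
  "algT Xa = TArrow (mo B (fst Xa)) (snd Xa) (fst Xa)"

definition coalgT :: "('o \<times> 'a) \<times> 'a \<Rightarrow> ('o, 'a) tarrow" where
  "coalgT Y = TArrow (fst (fst Y)) (snd Y) (co C (fst (fst Y)))"

lemma algT_simps [simp]:
  "src (algT Xa) = mo B (fst Xa)" "tgt (algT Xa) = fst Xa" "mor (algT Xa) = snd Xa"
  and coalgT_simps [simp]:
  "src (coalgT Y) = fst (fst Y)" "tgt (coalgT Y) = co C (fst (fst Y))" "mor (coalgT Y) = snd Y"
  by (simp_all add: algT_def coalgT_def)

lemma obj_alg_cat [simp]: "obj (alg_cat A B) = alg_obj A B"
  and cmp_alg_cat [simp]: "cmp (alg_cat A B) = cmp A"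
  and idt_alg_cat [simp]: "idt (alg_cat A B) Xa = idt A (fst Xa)"
  by (simp_all add: alg_cat_def)

lemma obj_EMcoalg [simp]: "obj (EMcoalg A B C \<theta>) = coalg_obj (alg_cat A B) (Cth A C \<theta>)"
  and cmp_EMcoalg [simp]: "cmp (EMcoalg A B C \<theta>) = cmp A"
  by (simp_all add: EMcoalg_def coalg_cat_def alg_cat_def)

lemma fst_Cth [simp]: "fst (co (Cth A C \<theta>) Xa) = co C (fst Xa)"
  and ca_Cth [simp]: "ca (Cth A C \<theta>) = ca C"
  and dlt_Cth [simp]: "dlt (Cth A C \<theta>) Xa = dlt C (fst Xa)"
  and snd_Cth [simp]: "snd (co (Cth A C \<theta>) Xa) = cmp A (ca C (snd Xa)) (\<theta> (fst Xa))"
  and eps_Cth [simp]: "eps (Cth A C \<theta>) Xa = eps C (fst Xa)"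
  and algT_Cth [simp]: "algT (co (Cth A C \<theta>) Xa) = Ct (algT Xa) \<odot> thetaT (fst Xa)"
  by (simp_all add: Cth_def algT_def tarrow_defs)

lemma fst_T_o [simp]: "fst (T_o B Xa) = mo B (fst Xa)"
  and algT_T_o [simp]: "algT (T_o B Xa) = muT (fst Xa)"
  by (simp_all add: T_o_def algT_def muT_def)

lemma fst_G_o [simp]: "fst (G_o A C \<theta> Xa) = co (Cth A C \<theta>) Xa"
  and snd_G_o [simp]: "snd (G_o A C \<theta> Xa) = dlt C (fst Xa)"
  and coalgT_G_o [simp]: "coalgT (G_o A C \<theta> Xa) = deltaT (fst Xa)"
  by (simp_all add: G_o_def Cth_def coalgT_def deltaT_def)

lemma fst_Tth_o [simp]: "fst (Tth_o A B \<theta> Y) = T_o B (fst Y)"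
  and coalgT_Tth_o [simp]: "coalgT (Tth_o A B \<theta> Y) = thetaT (fst (fst Y)) \<odot> Bt (coalgT Y)"
  by (simp_all add: Tth_o_def T_o_def coalgT_def tarrow_defs)

lemma mate_eq:
  "mate A B C \<theta> \<Omega> Y =
    mor (epsT (mo B (fst (fst Y)))
      \<odot> TArrow (mo B (co C (fst (fst Y)))) (\<Omega> (fst Y)) (co C (mo B (fst (fst Y))))
      \<odot> Bt (coalgT Y))"
  by (simp add: mate_def T_o_def coalgT_def tarrow_defs)

lemma alg_obj_iff:
  "Xa \<in> alg_obj A B \<longleftrightarrow>
    typed (algT Xa) \<and> algT Xa \<odot> etaT (fst Xa) = idT (fst Xa) \<and>
    algT Xa \<odot> Bt (algT Xa) = algT Xa \<odot> muT (fst Xa)"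
  using typed_objs(2)[of "algT Xa"] by (auto simp: alg_obj_def algT_def tarrow_defs)

lemma alg_hom_iff:
  "f \<in> hom (alg_cat A B) Xa Ya \<longleftrightarrow>
    Xa \<in> alg_obj A B \<and> Ya \<in> alg_obj A B \<and> typed (TArrow (fst Xa) f (fst Ya)) \<and>
    TArrow (fst Xa) f (fst Ya) \<odot> algT Xa = algT Ya \<odot> Bt (TArrow (fst Xa) f (fst Ya))"
  by (auto simp: alg_cat_def algT_def tarrow_defs)

(* These invert tarrow_defs and must not be combined with them. *)
lemmas TArrow_fold [simp] =
  idT_def[symmetric] muT_def[symmetric] etaT_def[symmetric] deltaT_def[symmetric]
  epsT_def[symmetric] thetaT_def[symmetric]

lemma alg_objD:
  assumes "Xa \<in> alg_obj A B"
  shows "fst Xa \<in> obj A" "typed (algT Xa)" "algT Xa \<odot> etaT (fst Xa) = idT (fst Xa)"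
    "algT Xa \<odot> Bt (algT Xa) = algT Xa \<odot> muT (fst Xa)"
  using assms by (auto simp: alg_obj_iff dest: typed_objs)

lemma T_o_alg: "fst Xa \<in> obj A \<Longrightarrow> T_o B Xa \<in> alg_obj A B"
  by (simp add: alg_obj_iff mu_assoc mu_etaT)

lemma Cth_alg:
  assumes alg: "Xa \<in> alg_obj A B"
  shows "co (Cth A C \<theta>) Xa \<in> alg_obj A B"
proof -
  define X a where "X = fst Xa" and "a = algT Xa"
  have X: "X \<in> obj A" and a: "typed a" "src a = mo B X" "tgt a = X"
    and unit: "a \<odot> etaT X = idT X" and mult: "a \<odot> Bt a = a \<odot> muT X"
    using alg_objD[OF alg] by (simp_all add: X_def a_def)
  have "(Ct a \<odot> thetaT X) \<odot> etaT (co C X) = Ct a \<odot> Ct (etaT X)"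
    using X a by (simp add: tcomp_assoc theta_eta)
  also have "\<dots> = idT (co C X)"
    using X a by (simp add: Ct_tcomp[symmetric] unit Ct_idT)
  finally have lifted_unit: "(Ct a \<odot> thetaT X) \<odot> etaT (co C X) = idT (co C X)" .
  have nat: "thetaT X \<odot> Bt (Ct a) = Ct (Bt a) \<odot> thetaT (mo B X)"
    using theta_natural[OF a(1)] a by simp
  have "(Ct a \<odot> thetaT X) \<odot> Bt (Ct a \<odot> thetaT X) = Ct a \<odot> Ct (Bt a) \<odot> thetaT (mo B X) \<odot> Bt (thetaT X)"
    using X a by (simp add: tcomp_assoc Bt_tcomp tcomp_reassoc2[OF nat])
  also have "\<dots> = Ct a \<odot> Ct (muT X) \<odot> thetaT (mo B X) \<odot> Bt (thetaT X)"
  proof -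
    have "Ct a \<odot> Ct (Bt a) = Ct a \<odot> Ct (muT X)"
      using X a by (simp add: Ct_tcomp[symmetric] mult)
    from tcomp_reassoc2[OF this] show ?thesis
      using X a by simp
  qed
  also have "\<dots> = (Ct a \<odot> thetaT X) \<odot> muT (co C X)"
    using X a by (simp add: tcomp_assoc theta_mu)
  finally show ?thesis
    using X a lifted_unit by (simp add: alg_obj_iff flip: X_def a_def)
qed

lemma coalg_obj_iff:
  "Y \<in> coalg_obj (alg_cat A B) (Cth A C \<theta>) \<longleftrightarrow>
    fst Y \<in> alg_obj A B \<and> typed (coalgT Y) \<and>
    coalgT Y \<odot> algT (fst Y) = algT (co (Cth A C \<theta>) (fst Y)) \<odot> Bt (coalgT Y) \<and>
    Ct (coalgT Y) \<odot> coalgT Y = deltaT (fst (fst Y)) \<odot> coalgT Y \<and>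
    epsT (fst (fst Y)) \<odot> coalgT Y = idT (fst (fst Y))"
  using Cth_alg[of "fst Y"]
  by (auto simp: coalg_obj_def alg_hom_iff coalgT_def tarrow_eq_iff[of "_ \<odot> _"]
      simp del: algT_Cth)

lemma EMcoalg_hom_iff:
  "f \<in> hom (EMcoalg A B C \<theta>) Y Z \<longleftrightarrow>
    Y \<in> coalg_obj (alg_cat A B) (Cth A C \<theta>) \<and> Z \<in> coalg_obj (alg_cat A B) (Cth A C \<theta>) \<and>
    typed (TArrow (fst (fst Y)) f (fst (fst Z))) \<and>
    TArrow (fst (fst Y)) f (fst (fst Z)) \<odot> algT (fst Y)
      = algT (fst Z) \<odot> Bt (TArrow (fst (fst Y)) f (fst (fst Z))) \<and>
    Ct (TArrow (fst (fst Y)) f (fst (fst Z))) \<odot> coalgT Y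
      = coalgT Z \<odot> TArrow (fst (fst Y)) f (fst (fst Z))"
  using coalg_obj_iff[of Y] coalg_obj_iff[of Z]
  by (auto simp: EMcoalg_def coalg_cat_def alg_hom_iff coalgT_def tarrow_eq_iff[of "Ct _ \<odot> _"])

lemma coalg_objD:
  assumes "Y \<in> coalg_obj (alg_cat A B) (Cth A C \<theta>)"
  shows "fst Y \<in> alg_obj A B" "fst (fst Y) \<in> obj A" "typed (coalgT Y)"
    "Ct (coalgT Y) \<odot> coalgT Y = deltaT (fst (fst Y)) \<odot> coalgT Y"
    "epsT (fst (fst Y)) \<odot> coalgT Y = idT (fst (fst Y))"
  using assms by (auto simp: coalg_obj_iff dest: alg_objD(1))

lemma eps_alg_hom:
  assumes alg: "Xa \<in> alg_obj A B"
  shows "eps C (fst Xa) \<in> hom (alg_cat A B) (co (Cth A C \<theta>) Xa) Xa"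
proof -
  define X a where "X = fst Xa" and "a = algT Xa"
  have X: "X \<in> obj A" and a: "typed a" "src a = mo B X" "tgt a = X"
    using alg_objD[OF alg] by (simp_all add: X_def a_def)
  have nat: "epsT X \<odot> Ct a = a \<odot> epsT (mo B X)"
    using eps_natural[OF a(1)] a by simp
  have "epsT X \<odot> Ct a \<odot> thetaT X = a \<odot> Bt (epsT X)"
    using X a by (simp add: tcomp_reassoc2[OF nat] theta_eps)
  then show ?thesis
    using alg Cth_alg[OF alg] X a by (simp add: alg_hom_iff flip: X_def a_def)
qed

lemma delta_alg_hom:
  assumes alg: "Xa \<in> alg_obj A B"
  shows "dlt C (fst Xa) \<in> hom (alg_cat A B) (co (Cth A C \<theta>) Xa) (co (Cth A C \<theta>) (co (Cth A C \<theta>) Xa))"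
proof -
  define X a where "X = fst Xa" and "a = algT Xa"
  have X: "X \<in> obj A" and a: "typed a" "src a = mo B X" "tgt a = X"
    using alg_objD[OF alg] by (simp_all add: X_def a_def)
  have nat: "Ct (Ct a) \<odot> deltaT (mo B X) = deltaT X \<odot> Ct a"
    using delta_natural[OF a(1)] a by simp
  have "(Ct (Ct a \<odot> thetaT X) \<odot> thetaT (co C X)) \<odot> Bt (deltaT X)
      = Ct (Ct a) \<odot> Ct (thetaT X) \<odot> thetaT (co C X) \<odot> Bt (deltaT X)"
    using X a by (simp add: Ct_tcomp tcomp_assoc)
  also have "\<dots> = Ct (Ct a) \<odot> deltaT (mo B X) \<odot> thetaT X"
    using X by (simp add: theta_delta)
  also have "\<dots> = deltaT X \<odot> Ct a \<odot> thetaT X"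
    using X a by (simp add: tcomp_reassoc2[OF nat])
  finally show ?thesis
    using Cth_alg[OF alg] Cth_alg[OF Cth_alg[OF alg]] X a
    by (simp add: alg_hom_iff flip: X_def a_def)
qed

lemma G_o_coalg: "Xa \<in> alg_obj A B \<Longrightarrow> G_o A C \<theta> Xa \<in> coalg_obj (alg_cat A B) (Cth A C \<theta>)"
  using delta_alg_hom alg_objD(1) by (simp add: coalg_obj_iff alg_hom_iff delta_coassoc epsT_delta)

lemma Tth_o_coalg:
  assumes coalg: "Y \<in> coalg_obj (alg_cat A B) (Cth A C \<theta>)"
  shows "Tth_o A B \<theta> Y \<in> coalg_obj (alg_cat A B) (Cth A C \<theta>)"
proof -
  define X d where "X = fst (fst Y)" and "d = coalgT Y"
  have X: "X \<in> obj A" and d: "typed d" "src d = X" "tgt d = co C X"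
    and coassoc: "Ct d \<odot> d = deltaT X \<odot> d" and counit: "epsT X \<odot> d = idT X"
    using coalg_objD[OF coalg] by (simp_all add: X_def d_def)
  have mu_nat: "muT (co C X) \<odot> Bt (Bt d) = Bt d \<odot> muT X"
    using mu_natural[OF d(1)] d by simp
  have theta_nat: "thetaT (co C X) \<odot> Bt (Ct d) = Ct (Bt d) \<odot> thetaT X"
    using theta_natural[OF d(1)] d by simp
  have "(thetaT X \<odot> Bt d) \<odot> muT X = thetaT X \<odot> muT (co C X) \<odot> Bt (Bt d)"
    using X d by (simp add: tcomp_assoc mu_nat)
  also have "\<dots> = (Ct (muT X) \<odot> thetaT (mo B X)) \<odot> Bt (thetaT X \<odot> Bt d)"
    using X d by (simp add: tcomp_reassoc[OF theta_mu[OF X]] tcomp_assoc Bt_tcomp)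
  finally have alg_map:
    "(thetaT X \<odot> Bt d) \<odot> muT X = (Ct (muT X) \<odot> thetaT (mo B X)) \<odot> Bt (thetaT X \<odot> Bt d)" .
  have "Ct (thetaT X \<odot> Bt d) \<odot> thetaT X \<odot> Bt d
      = Ct (thetaT X) \<odot> thetaT (co C X) \<odot> Bt (Ct d \<odot> d)"
    using X d by (simp add: Ct_tcomp Bt_tcomp tcomp_assoc tcomp_reassoc2[OF theta_nat[symmetric]])
  also have "\<dots> = deltaT (mo B X) \<odot> thetaT X \<odot> Bt d"
    using X d by (simp add: coassoc Bt_tcomp tcomp_reassoc[OF theta_delta[OF X]] tcomp_assoc)
  finally have coassoc':
    "Ct (thetaT X \<odot> Bt d) \<odot> thetaT X \<odot> Bt d = deltaT (mo B X) \<odot> thetaT X \<odot> Bt d" .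
  have counit': "epsT (mo B X) \<odot> thetaT X \<odot> Bt d = idT (mo B X)"
    using X d by (simp add: tcomp_reassoc[OF theta_eps[OF X]] Bt_tcomp[symmetric] counit Bt_idT)
  show ?thesis
    using coalg_objD(1)[OF coalg] T_o_alg[OF X[unfolded X_def]] alg_map coassoc' counit' X d
    by (simp add: coalg_obj_iff tcomp_assoc flip: X_def d_def)
qed

lemma theta_EMcoalg_hom:
  assumes alg: "Xa \<in> alg_obj A B"
  shows "\<theta> (fst Xa) \<in>
    hom (EMcoalg A B C \<theta>) (Tth_o A B \<theta> (G_o A C \<theta> Xa)) (G_o A C \<theta> (T_o B Xa))"
  using Tth_o_coalg[OF G_o_coalg[OF alg]] G_o_coalg[OF T_o_alg[OF alg_objD(1)[OF alg]]]
    alg_objD(1)[OF alg]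
  by (simp add: EMcoalg_hom_iff theta_mu theta_delta tcomp_assoc)

lemma Omega_nat_theta: "Omega_nat A B C \<theta> (\<lambda>Xa. \<theta> (fst Xa))"
proof -
  have "cmp A (\<theta> (fst Ya)) (ma B (ca C f)) = cmp A (ca C (ma B f)) (\<theta> (fst Xa))"
    if "f \<in> hom (alg_cat A B) Xa Ya" for f Xa Ya
  proof -
    have "typed (TArrow (fst Xa) f (fst Ya))"
      using that by (simp add: alg_hom_iff)
    from arg_cong[OF theta_natural[OF this], of mor] show ?thesis by simp
  qed
  then show ?thesis
    using theta_EMcoalg_hom by (simp add: Omega_nat_def is_nat_def)
qed

lemma mate_theta:
  assumes coalg: "Y \<in> coalg_obj (alg_cat A B) (Cth A C \<theta>)"
  shows "mate A B C \<theta> (\<lambda>Xa. \<theta> (fst Xa)) Y = idt (alg_cat A B) (T_o B (fst Y))"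
proof -
  define X d where "X = fst (fst Y)" and "d = coalgT Y"
  have X: "X \<in> obj A" and d: "typed d" "src d = X" "tgt d = co C X"
    and counit: "epsT X \<odot> d = idT X"
    using coalg_objD[OF coalg] by (simp_all add: X_def d_def)
  have "epsT (mo B X) \<odot> thetaT X \<odot> Bt d = idT (mo B X)"
    using X d by (simp add: tcomp_reassoc[OF theta_eps[OF X]] Bt_tcomp[symmetric] counit Bt_idT)
  then show ?thesis
    by (simp add: mate_eq flip: X_def d_def)
qed

lemma eq_theta_if_mate_id:
  fixes X :: 'o and w w' :: 'a
  defines "W \<equiv> TArrow (mo B (co C X)) w (co C (mo B X))"
    and "W' \<equiv> TArrow (mo B (co C (co C X))) w' (co C (mo B (co C X)))"
  assumes X: "X \<in> obj A" and W: "typed W" and W': "typed W'"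
    and coalg_map: "Ct W \<odot> thetaT (co C X) \<odot> Bt (deltaT X) = deltaT (mo B X) \<odot> W"
    and natural: "W \<odot> Bt (Ct (epsT X)) = Ct (Bt (epsT X)) \<odot> W'"
    and mate: "epsT (mo B (co C X)) \<odot> W' \<odot> Bt (deltaT X) = idT (mo B (co C X))"
  shows "w = \<theta> X"
proof -
  have W_src_tgt: "src W = mo B (co C X)" "tgt W = co C (mo B X)"
    "src W' = mo B (co C (co C X))" "tgt W' = co C (mo B (co C X))"
    by (simp_all add: W_def W'_def)
  have eps_nat: "epsT (mo B X) \<odot> Ct (Bt (epsT X)) = Bt (epsT X) \<odot> epsT (mo B (co C X))"
    using eps_natural[of "Bt (epsT X)"] X by simp
  have "epsT (mo B X) \<odot> W = epsT (mo B X) \<odot> W \<odot> Bt (Ct (epsT X)) \<odot> Bt (deltaT X)"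
    using X W by (simp add: Bt_tcomp[symmetric] Ct_epsT_delta Bt_idT tcomp_idT W_src_tgt)
  also have "\<dots> = epsT (mo B X) \<odot> Ct (Bt (epsT X)) \<odot> W' \<odot> Bt (deltaT X)"
    using X W W' by (simp add: tcomp_reassoc2[OF natural] W_src_tgt)
  also have "\<dots> = Bt (epsT X)"
    using X W' by (simp add: tcomp_reassoc2[OF eps_nat] mate tcomp_idT W_src_tgt)
  finally have counit: "epsT (mo B X) \<odot> W = Bt (epsT X)" .
  have theta_nat: "thetaT X \<odot> Bt (Ct (epsT X)) = Ct (Bt (epsT X)) \<odot> thetaT (co C X)"
    using theta_natural[of "epsT X"] X by simp
  have "W = Ct (epsT (mo B X)) \<odot> deltaT (mo B X) \<odot> W"
    using X W by (simp add: tcomp_reassoc[OF Ct_epsT_delta] idT_tcomp W_src_tgt)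
  also have "\<dots> = Ct (epsT (mo B X) \<odot> W) \<odot> thetaT (co C X) \<odot> Bt (deltaT X)"
    using X W by (simp add: coalg_map[symmetric] Ct_tcomp tcomp_assoc W_src_tgt)
  also have "\<dots> = thetaT X \<odot> Bt (Ct (epsT X)) \<odot> Bt (deltaT X)"
    using X by (simp add: counit tcomp_reassoc[OF theta_nat[symmetric]] tcomp_assoc)
  also have "\<dots> = thetaT X"
    using X by (simp add: Bt_tcomp[symmetric] Ct_epsT_delta Bt_idT tcomp_idT)
  finally show ?thesis
    by (simp add: W_def tarrow_eq_iff)
qed

lemma Omega_unique:
  assumes nat: "Omega_nat A B C \<theta> \<Omega>"
    and mate: "\<forall>Y\<in>coalg_obj (alg_cat A B) (Cth A C \<theta>).
      mate A B C \<theta> \<Omega> Y = idt (alg_cat A B) (T_o B (fst Y))"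
    and alg: "Xa \<in> alg_obj A B"
  shows "\<Omega> Xa = \<theta> (fst Xa)"
proof -
  define X Xc where "X = fst Xa" and "Xc = co (Cth A C \<theta>) Xa"
  have X: "X \<in> obj A" and Xc: "Xc \<in> alg_obj A B"
    using alg_objD(1)[OF alg] Cth_alg[OF alg] by (simp_all add: X_def Xc_def)
  have hom: "\<And>Za. Za \<in> alg_obj A B \<Longrightarrow>
      \<Omega> Za \<in> hom (EMcoalg A B C \<theta>) (Tth_o A B \<theta> (G_o A C \<theta> Za)) (G_o A C \<theta> (T_o B Za))"
    and natural: "\<And>Za Za' f. f \<in> hom (alg_cat A B) Za Za' \<Longrightarrow>
      cmp A (\<Omega> Za') (ma B (ca C f)) = cmp A (ca C (ma B f)) (\<Omega> Za)"
    using nat by (auto simp: Omega_nat_def is_nat_def)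
  let ?W = "TArrow (mo B (co C X)) (\<Omega> Xa) (co C (mo B X))"
    and ?W' = "TArrow (mo B (co C (co C X))) (\<Omega> Xc) (co C (mo B (co C X)))"
  have "\<Omega> Xa = \<theta> X"
  proof (rule eq_theta_if_mate_id[OF X])
    show "typed ?W" and "Ct ?W \<odot> thetaT (co C X) \<odot> Bt (deltaT X) = deltaT (mo B X) \<odot> ?W"
      using hom[OF alg] by (simp_all add: EMcoalg_hom_iff X_def)
    show "typed ?W'"
      using hom[OF Xc] by (simp add: EMcoalg_hom_iff X_def Xc_def)
    show "?W \<odot> Bt (Ct (epsT X)) = Ct (Bt (epsT X)) \<odot> ?W'"
      using natural[OF eps_alg_hom[OF alg]] by (simp add: tarrow_eq_iff X_def Xc_def)
    show "epsT (mo B (co C X)) \<odot> ?W' \<odot> Bt (deltaT X) = idT (mo B (co C X))"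
      using bspec[OF mate G_o_coalg[OF alg]] by (simp add: mate_eq tarrow_eq_iff X_def Xc_def)
  qed
  then show ?thesis
    by (simp add: X_def)
qed

lemma Omega_nat_cong:
  assumes "\<And>Xa. Xa \<in> alg_obj A B \<Longrightarrow> \<Omega> Xa = \<Omega>' Xa"
  shows "Omega_nat A B C \<theta> \<Omega> \<longleftrightarrow> Omega_nat A B C \<theta> \<Omega>'"
proof -
  have "Xa \<in> alg_obj A B \<and> Ya \<in> alg_obj A B" if "f \<in> hom (alg_cat A B) Xa Ya" for f Xa Ya
    using that by (simp add: alg_hom_iff)
  then show ?thesis
    using assms unfolding Omega_nat_def is_nat_def by (metis obj_alg_cat)
qed

lemma theta_comult:
  assumes X: "X \<in> obj A"
  shows "Ct (Bt (etaT X)) \<odot> thetaT X = thetaT (mo B X) \<odot> Bt (thetaT X) \<odot> Bt (etaT (co C X))"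
proof -
  have "thetaT (mo B X) \<odot> Bt (Ct (etaT X)) = Ct (Bt (etaT X)) \<odot> thetaT X"
    using theta_natural[of "etaT X"] X by simp
  then show ?thesis
    using X by (simp add: Bt_tcomp[symmetric] theta_eta)
qed

lemma mate_id_iff_eq_theta:
  "Omega_nat A B C \<theta> \<Omega> \<and>
     (\<forall>Y\<in>obj (EMcoalg A B C \<theta>). mate A B C \<theta> \<Omega> Y = idt (alg_cat A B) (T_o B (fst Y)))
   \<longleftrightarrow> (\<forall>Xa\<in>obj (alg_cat A B). \<Omega> Xa = \<theta> (fst Xa))"
proof
  assume "Omega_nat A B C \<theta> \<Omega> \<and>
    (\<forall>Y\<in>obj (EMcoalg A B C \<theta>). mate A B C \<theta> \<Omega> Y = idt (alg_cat A B) (T_o B (fst Y)))"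
  then show "\<forall>Xa\<in>obj (alg_cat A B). \<Omega> Xa = \<theta> (fst Xa)"
    using Omega_unique by simp
next
  assume eq: "\<forall>Xa\<in>obj (alg_cat A B). \<Omega> Xa = \<theta> (fst Xa)"
  then have "Omega_nat A B C \<theta> \<Omega>"
    using Omega_nat_cong[of \<Omega> "\<lambda>Xa. \<theta> (fst Xa)"] Omega_nat_theta by simp
  moreover have "mate A B C \<theta> \<Omega> Y = idt (alg_cat A B) (T_o B (fst Y))"
    if "Y \<in> coalg_obj (alg_cat A B) (Cth A C \<theta>)" for Y
    using mate_theta[OF that] eq coalg_objD(1)[OF that] by (simp add: mate_def)
  ultimately show "Omega_nat A B C \<theta> \<Omega> \<and>
    (\<forall>Y\<in>obj (EMcoalg A B C \<theta>). mate A B C \<theta> \<Omega> Y = idt (alg_cat A B) (T_o B (fst Y)))"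
    by simp
qed

lemma implements_ext_theta_iff:
  "implements_ext A B C \<theta> (\<lambda>Xa. \<theta> (fst Xa)) \<longleftrightarrow>
    (\<forall>Xa\<in>obj (alg_cat A B).
       iso_in (EMcoalg A B C \<theta>) (\<theta> (fst Xa)) (Tth_o A B \<theta> (G_o A C \<theta> Xa)) (G_o A C \<theta> (T_o B Xa)))"
proof -
  have "cmp A (ca C (ma B (eta B (fst Xa)))) (\<theta> (fst Xa)) =
      cmp A (\<theta> (mo B (fst Xa))) (cmp A (ma B (\<theta> (fst Xa))) (ma B (eta B (co C (fst Xa)))))"
    if "Xa \<in> alg_obj A B" for Xa
    using arg_cong[OF theta_comult[OF alg_objD(1)[OF that]], of mor] by simp
  then show ?thesis
    using Omega_nat_theta by (auto simp: implements_ext_def)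
qed

end

theorem lemma3p6:
  fixes A :: "('o, 'a) cat" and B :: "('o, 'a) monad" and C :: "('o, 'a) comonad"
    and \<theta> :: "'o \<Rightarrow> 'a"
  assumes "is_cat A" and "is_monad A B" and "is_comonad A C" and "is_mixed_dist A B C \<theta>"
  shows "(\<forall>\<Omega>. (Omega_nat A B C \<theta> \<Omega> \<and>
               (\<forall>Y\<in>obj (EMcoalg A B C \<theta>).
                  mate A B C \<theta> \<Omega> Y = idt (alg_cat A B) (T_o B (fst Y))))
           \<longleftrightarrow> (\<forall>Xa\<in>obj (alg_cat A B). \<Omega> Xa = \<theta> (fst Xa))) \<and>
         (implements_ext A B C \<theta> (\<lambda>Xa. \<theta> (fst Xa)) \<longleftrightarrow>
           (\<forall>Xa\<in>obj (alg_cat A B).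
              iso_in (EMcoalg A B C \<theta>) (\<theta> (fst Xa))
                (Tth_o A B \<theta> (G_o A C \<theta> Xa)) (G_o A C \<theta> (T_o B Xa))))"
proof -
  interpret mixed_distributive_law A B C \<theta>
    using assms by unfold_locales
  show ?thesis
    using mate_id_iff_eq_theta implements_ext_theta_iff by blast
qed

end
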